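(* For all $u,v\in\mathfrak{A}^0_{\mathrm{G}}$, we have $u\sqcup\!\sqcup v\in\mathfrak{A}^0_{\mathrm{G}}$.
   Context: $\mathbb{Q}\langle\pi,y\rangle$ is the free noncommutative $\mathbb{Q}$-algebra on $\pi,y$ with unit $\mathbf{1}$, and $\rho=\pi-\mathbf{1}$. For integers $0\le t\le s$ set $z_{t,s}=\rho^t\pi^{s-t}y$. $\mathfrak{A}^0_{\mathrm{G}}$ is the $\mathbb{Q}$-span in $\mathbb{Q}\langle\pi,y\rangle$ of all products $z_{t_1,s_1}z_{t_2,s_2}\cdots z_{t_d,s_d}$ ($d\ge1$) with $1\le t_1\le s_1$ and $0\le t_j\le s_j$ for $j\ge2$. The shuffle $\sqcup\!\sqcup$ is the bilinear product on $\mathbb{Q}\langle\pi,y\rangle$ with $\mathbf{1}\sqcup\!\sqcup u=u\sqcup\!\sqcup\mathbf{1}=u$, $(yu)\sqcup\!\sqcup v=u\sqcup\!\sqcup(yv)=y(u\sqcup\!\sqcup v)$, $\pi u\sqcup\!\sqcup\pi v=\pi(u\sqcup\!\sqcup\pi v)+\pi(\pi u\sqcup\!\sqcup v)-\pi(u\sqcup\!\sqcup v)$ for words $u,v$. *)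

theory Defs
  imports Complex_Main "HOL-Library.Poly_Mapping"
begin

text \<open>The free noncommutative Q-algebra Q<pi,y>: finitely supported Q-valued
  functions on words over the alphabet {pi, y}, with concatenation product.\<close>

datatype letter = Pi | Y

type_synonym word = "letter list"
type_synonym ncpoly = "word \<Rightarrow>\<^sub>0 rat"

definition smult :: "rat \<Rightarrow> ncpoly \<Rightarrow> ncpoly" where
  "smult c p = (\<Sum>u\<in>Poly_Mapping.keys p. Poly_Mapping.single u (c * Poly_Mapping.lookup p u))"

definition nmul :: "ncpoly \<Rightarrow> ncpoly \<Rightarrow> ncpoly" where
  "nmul p q = (\<Sum>u\<in>Poly_Mapping.keys p. \<Sum>v\<in>Poly_Mapping.keys q.
      Poly_Mapping.single (u @ v) (Poly_Mapping.lookup p u * Poly_Mapping.lookup q v))"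

definition one :: ncpoly where "one = Poly_Mapping.single [] 1"
definition piv :: ncpoly where "piv = Poly_Mapping.single [Pi] 1"
definition yv :: ncpoly where "yv = Poly_Mapping.single [Y] 1"
definition rho :: ncpoly where "rho = piv - one"

primrec npow :: "ncpoly \<Rightarrow> nat \<Rightarrow> ncpoly" where
  "npow x 0 = one"
| "npow x (Suc n) = nmul x (npow x n)"

definition z :: "nat \<Rightarrow> nat \<Rightarrow> ncpoly" where
  "z t s = nmul (npow rho t) (nmul (npow piv (s - t)) yv)"

fun zprod :: "(nat \<times> nat) list \<Rightarrow> ncpoly" where
  "zprod [] = one"
| "zprod ((t, s) # ps) = nmul (z t s) (zprod ps)"

inductive_set qspan :: "ncpoly set \<Rightarrow> ncpoly set" for S where
  qspan_zero: "0 \<in> qspan S"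
| qspan_gen: "x \<in> S \<Longrightarrow> x \<in> qspan S"
| qspan_add: "a \<in> qspan S \<Longrightarrow> b \<in> qspan S \<Longrightarrow> a + b \<in> qspan S"
| qspan_smult: "a \<in> qspan S \<Longrightarrow> smult c a \<in> qspan S"

definition AG0 :: "ncpoly set" where
  "AG0 = qspan {zprod ps | ps. ps \<noteq> [] \<and> 1 \<le> fst (hd ps)
                   \<and> (\<forall>(t, s) \<in> set ps. t \<le> s)}"

definition prep :: "letter \<Rightarrow> ncpoly \<Rightarrow> ncpoly" where
  "prep a p = nmul (Poly_Mapping.single [a] 1) p"

function wsh :: "word \<Rightarrow> word \<Rightarrow> ncpoly" where
  "wsh [] v = Poly_Mapping.single v 1"
| "wsh (a # u) [] = Poly_Mapping.single (a # u) 1"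
| "wsh (Y # u) (b # v) = prep Y (wsh u (b # v))"
| "wsh (Pi # u) (Y # v) = prep Y (wsh (Pi # u) v)"
| "wsh (Pi # u) (Pi # v) = prep Pi (wsh u (Pi # v)) + prep Pi (wsh (Pi # u) v)
                            - prep Pi (wsh u v)"
  by pat_completeness auto
termination by (relation "measure (\<lambda>(u, v). length u + length v)") auto

definition shuffle :: "ncpoly \<Rightarrow> ncpoly \<Rightarrow> ncpoly" where
  "shuffle p q = (\<Sum>u\<in>Poly_Mapping.keys p. \<Sum>v\<in>Poly_Mapping.keys q. smult (Poly_Mapping.lookup p u * Poly_Mapping.lookup q v) (wsh u v))"

end

theory Submission
  imports Defs
begin

text \<open>Let \<open>\<Phi>\<close> (\<open>strip_pi\<close> below) be the linear map deleting the leading letters \<open>\<pi>\<close> of every word. Then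
  \<open>AG0\<close> is the space of polynomials supported on words ending in \<open>y\<close> and killed by \<open>\<Phi>\<close>.
  A generator with \<open>t\<^sub>1 \<ge> 1\<close> is \<open>\<rho>X = \<pi>X - X\<close> with \<open>X\<close> supported on words ending in \<open>y\<close>,
  and \<open>\<Phi>(\<pi>X) = \<Phi>(X)\<close>. Conversely every word ending in \<open>y\<close> is a product of blocks
  \<open>\<pi>\<^sup>s y = z 0 s\<close>, so \<open>\<pi>w - w = \<rho>w\<close> is a generator, and \<open>w - \<Phi>(w)\<close> telescopes into such
  differences. Shuffles of words ending in \<open>y\<close> are again supported on such words, and the
  recursion of the shuffle gives, on words,
  \<open>\<Phi>(wsh u v) = \<Phi>(wsh u (\<Phi>v)) + \<Phi>(wsh (\<Phi>u) v) - \<Phi>(wsh (\<Phi>u) (\<Phi>v))\<close>;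
  extended bilinearly, each term on the right vanishes as soon as \<open>\<Phi>\<close> kills both factors.\<close>

abbreviation lookup :: "('a \<Rightarrow>\<^sub>0 'b::zero) \<Rightarrow> 'a \<Rightarrow> 'b" where
  "lookup \<equiv> Poly_Mapping.lookup"
abbreviation keys :: "('a \<Rightarrow>\<^sub>0 'b::zero) \<Rightarrow> 'a set" where
  "keys \<equiv> Poly_Mapping.keys"
abbreviation single :: "'a \<Rightarrow> 'b::zero \<Rightarrow> 'a \<Rightarrow>\<^sub>0 'b" where
  "single \<equiv> Poly_Mapping.single"

subsection \<open>Extending maps on monomials linearly\<close>

definition pm_extend :: "('a \<Rightarrow> 'b::zero \<Rightarrow> 'c::comm_monoid_add) \<Rightarrow> ('a \<Rightarrow>\<^sub>0 'b) \<Rightarrow> 'c" where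
  "pm_extend g p = (\<Sum>u\<in>keys p. g u (lookup p u))"

definition coeff_additive :: "('a \<Rightarrow> 'b::plus \<Rightarrow> 'c::plus) \<Rightarrow> bool" where
  "coeff_additive g \<longleftrightarrow> (\<forall>u a b. g u (a + b) = g u a + g u b)"

lemma coeff_additive_zero:
  fixes g :: "'a \<Rightarrow> 'b::monoid_add \<Rightarrow> 'c::cancel_comm_monoid_add"
  assumes "coeff_additive g"
  shows "g u 0 = 0"
  using assms[unfolded coeff_additive_def, rule_format, of u 0 0] by simp

lemma pm_extend_superset:
  assumes "finite S" "keys p \<subseteq> S" "\<And>u. g u 0 = 0"
  shows "pm_extend g p = (\<Sum>u\<in>S. g u (lookup p u))"
  unfolding pm_extend_def
  by (rule sum.mono_neutral_left) (use assms in \<open>auto simp: in_keys_iff\<close>)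

lemma pm_extend_zero [simp]: "pm_extend g 0 = 0"
  by (simp add: pm_extend_def)

lemma pm_extend_single:
  assumes "g u 0 = 0"
  shows "pm_extend g (single u a) = g u a"
  using assms by (simp add: pm_extend_def)

lemma pm_extend_single_additive:
  fixes g :: "'a \<Rightarrow> 'b::monoid_add \<Rightarrow> 'c::cancel_comm_monoid_add"
  assumes "coeff_additive g"
  shows "pm_extend g (single u a) = g u a"
  using coeff_additive_zero[OF assms] by (rule pm_extend_single)

lemma pm_extend_add:
  fixes g :: "'a \<Rightarrow> 'b::monoid_add \<Rightarrow> 'c::cancel_comm_monoid_add"
  assumes "coeff_additive g"
  shows "pm_extend g (p + q) = pm_extend g p + pm_extend g q"
proof -
  have zero: "\<And>u. g u 0 = 0"
    using coeff_additive_zero[OF assms] .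
  let ?S = "keys p \<union> keys q"
  have "pm_extend g (p + q) = (\<Sum>u\<in>?S. g u (lookup p u)) + (\<Sum>u\<in>?S. g u (lookup q u))"
    using pm_extend_superset[of ?S "p + q" g] keys_add[of p q] zero assms
    by (simp add: lookup_add coeff_additive_def sum.distrib)
  also have "\<dots> = pm_extend g p + pm_extend g q"
    using pm_extend_superset[of ?S p g] pm_extend_superset[of ?S q g] zero by auto
  finally show ?thesis .
qed

lemma pm_extend_diff:
  fixes g :: "'a \<Rightarrow> 'b::ab_group_add \<Rightarrow> 'c::ab_group_add"
  assumes "coeff_additive g"
  shows "pm_extend g (p - q) = pm_extend g p - pm_extend g q"
  using pm_extend_add[OF assms, of "p - q" q] by simp

lemma pm_extend_sum:
  fixes g :: "'a \<Rightarrow> 'b::comm_monoid_add \<Rightarrow> 'c::cancel_comm_monoid_add"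
  assumes "coeff_additive g"
  shows "pm_extend g (\<Sum>i\<in>I. f i) = (\<Sum>i\<in>I. pm_extend g (f i))"
  by (induction I rule: infinite_finite_induct) (auto simp: pm_extend_add[OF assms])

lemma pm_extend_single_id: "pm_extend single p = p"
proof (rule poly_mapping_eqI)
  fix w
  have "lookup (pm_extend single p) w = (\<Sum>u\<in>keys p. if u = w then lookup p u else 0)"
    by (simp add: pm_extend_def lookup_sum lookup_single when_def)
  also have "\<dots> = lookup p w"
    by (simp add: in_keys_iff)
  finally show "lookup (pm_extend single p) w = lookup p w" .
qed

definition push :: "('a \<Rightarrow> 'b) \<Rightarrow> ('a \<Rightarrow>\<^sub>0 'c::ab_group_add) \<Rightarrow> 'b \<Rightarrow>\<^sub>0 'c" where
  "push f = pm_extend (\<lambda>u. single (f u))"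

lemma coeff_additive_push: "coeff_additive (\<lambda>u. single (f u))"
  by (simp add: coeff_additive_def single_add)

lemma push_zero [simp]: "push f 0 = 0"
  by (simp add: push_def)

lemma push_single: "push f (single u a) = single (f u) a"
  by (simp add: push_def pm_extend_single)

lemma push_add: "push f (p + q) = push f p + push f q"
  unfolding push_def by (rule pm_extend_add[OF coeff_additive_push])

lemma push_diff: "push f (p - q) = push f p - push f q"
  unfolding push_def by (rule pm_extend_diff[OF coeff_additive_push])

lemma push_sum: "push f (\<Sum>i\<in>I. g i) = (\<Sum>i\<in>I. push f (g i))"
  unfolding push_def by (rule pm_extend_sum[OF coeff_additive_push])

lemma pm_extend_push:
  fixes h :: "'b \<Rightarrow> 'c::ab_group_add \<Rightarrow> 'd::ab_group_add"
  assumes "coeff_additive h"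
  shows "pm_extend h (push f q) = (\<Sum>v\<in>keys q. h (f v) (lookup q v))"
  unfolding push_def pm_extend_def[of _ q]
  by (simp add: pm_extend_sum[OF assms] pm_extend_single_additive[OF assms])

lemma lookup_smult [simp]: "lookup (smult c p) w = c * lookup p w"
proof -
  have "lookup (smult c p) w = (\<Sum>u\<in>keys p. if u = w then c * lookup p u else 0)"
    by (simp add: smult_def lookup_sum lookup_single when_def)
  also have "\<dots> = c * lookup p w"
    by (simp add: in_keys_iff)
  finally show ?thesis .
qed

lemma keys_smult: "keys (smult c p) \<subseteq> keys p"
  by (auto simp: in_keys_iff)

lemma smult_add_left: "smult (c + d) p = smult c p + smult d p"
  by (rule poly_mapping_eqI) (simp add: lookup_add algebra_simps)

lemma smult_add_right: "smult c (p + q) = smult c p + smult c q"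
  by (rule poly_mapping_eqI) (simp add: lookup_add algebra_simps)

lemma smult_diff_right: "smult c (p - q) = smult c p - smult c q"
  by (rule poly_mapping_eqI) (simp add: lookup_minus algebra_simps)

lemma smult_zero_right [simp]: "smult c 0 = 0"
  by (rule poly_mapping_eqI) simp

lemma smult_single: "smult c (single u a) = single u (c * a)"
  by (rule poly_mapping_eqI) (simp add: lookup_single when_def)

lemma smult_sum: "smult c (\<Sum>i\<in>I. f i) = (\<Sum>i\<in>I. smult c (f i))"
  by (rule poly_mapping_eqI) (simp add: lookup_sum sum_distrib_left)

lemma push_smult: "push f (smult c p) = smult c (push f p)"
proof -
  have "push f (smult c p) = (\<Sum>u\<in>keys p. single (f u) (c * lookup p u))"
    unfolding push_def by (subst pm_extend_superset[of "keys p"]) (auto simp: keys_smult)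
  also have "\<dots> = smult c (push f p)"
    by (simp add: push_def pm_extend_def smult_sum smult_single)
  finally show ?thesis .
qed

lemma nmul_eq_pm_extend: "nmul p q = pm_extend (\<lambda>u a. pm_extend (\<lambda>v b. single (u @ v) (a * b)) q) p"
  by (simp add: nmul_def pm_extend_def)

lemma coeff_additive_nmul_inner: "coeff_additive (\<lambda>v b. single (u @ v) (a * b :: rat))"
  by (simp add: coeff_additive_def distrib_left single_add)

lemma coeff_additive_nmul_outer:
  "coeff_additive (\<lambda>u a. pm_extend (\<lambda>v b. single (u @ v) (a * b)) (q :: ncpoly))"
  unfolding coeff_additive_def pm_extend_def by (simp add: distrib_right single_add sum.distrib)

lemma nmul_diff_left: "nmul (p - p') q = nmul p q - nmul p' q"
  unfolding nmul_eq_pm_extend by (rule pm_extend_diff[OF coeff_additive_nmul_outer])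

lemma nmul_single_left: "nmul (single u a) q = (\<Sum>v\<in>keys q. single (u @ v) (a * lookup q v))"
  unfolding nmul_eq_pm_extend
  by (subst pm_extend_single) (auto simp: pm_extend_def)

lemma nmul_single_single: "nmul (single u a) (single v b) = single (u @ v) (a * b)"
  by (simp add: nmul_single_left)

lemma nmul_one_left: "nmul one q = q"
  using pm_extend_single_id[of q] by (simp add: one_def nmul_single_left pm_extend_def)

lemma nmul_assoc: "nmul (nmul p q) r = nmul p (nmul q r)"
proof -
  have "nmul (nmul p q) r
      = (\<Sum>u\<in>keys p. \<Sum>v\<in>keys q. \<Sum>w\<in>keys r. single (u @ v @ w) (lookup p u * lookup q v * lookup r w))"
    unfolding nmul_eq_pm_extend[of "nmul p q"] unfolding nmul_def[of p q]
    by (simp add: pm_extend_sum[OF coeff_additive_nmul_outer]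
        pm_extend_single_additive[OF coeff_additive_nmul_outer]) (simp add: pm_extend_def mult.assoc)
  also have "\<dots> = (\<Sum>u\<in>keys p. pm_extend (\<lambda>v b. single (u @ v) (lookup p u * b)) (nmul q r))"
    unfolding nmul_def[of q r]
    by (simp add: pm_extend_sum[OF coeff_additive_nmul_inner]
        pm_extend_single_additive[OF coeff_additive_nmul_inner] mult.assoc)
  also have "\<dots> = nmul p (nmul q r)"
    by (simp add: nmul_eq_pm_extend pm_extend_def)
  finally show ?thesis .
qed

lemma keys_nmul: "keys (nmul p q) \<subseteq> {u @ v | u v. u \<in> keys p \<and> v \<in> keys q}"
  unfolding nmul_def
  by (fastforce dest!: subsetD[OF keys_sum] split: if_splits)

lemma prep_Pi: "prep Pi = nmul piv"
  by (simp add: prep_def piv_def fun_eq_iff)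

lemma keys_prep: "keys (prep a p) \<subseteq> (#) a ` keys p"
  using keys_nmul[of "single [a] 1" p] by (auto simp: prep_def)

lemma nmul_rho: "nmul rho p = prep Pi p - p"
  by (simp add: rho_def nmul_diff_left nmul_one_left prep_Pi)

lemma z_Suc_Suc: "z (Suc t) (Suc s) = nmul rho (z t s)"
  by (simp add: z_def nmul_assoc)

lemma z_0_0: "z 0 0 = yv"
  by (simp add: z_def nmul_one_left)

lemma z_0_Suc: "z 0 (Suc s) = prep Pi (z 0 s)"
  by (simp add: z_def nmul_one_left nmul_assoc prep_Pi)

subsection \<open>Deleting leading letters \<open>\<pi>\<close>\<close>

definition strip_pi_word :: "word \<Rightarrow> word" where
  "strip_pi_word = dropWhile ((=) Pi)"

lemma strip_pi_word_simps [simp]: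
  "strip_pi_word [] = []"
  "strip_pi_word (Pi # w) = strip_pi_word w"
  "strip_pi_word (Y # w) = Y # w"
  by (simp_all add: strip_pi_word_def)

definition strip_pi :: "ncpoly \<Rightarrow> ncpoly" where
  "strip_pi = push strip_pi_word"

lemma strip_pi_add: "strip_pi (p + q) = strip_pi p + strip_pi q"
  by (simp add: strip_pi_def push_add)

lemma strip_pi_diff: "strip_pi (p - q) = strip_pi p - strip_pi q"
  by (simp add: strip_pi_def push_diff)

lemma strip_pi_prep_Pi: "strip_pi (prep Pi p) = strip_pi p"
proof -
  have "prep Pi p = (\<Sum>v\<in>keys p. single (Pi # v) (lookup p v))"
    by (simp add: prep_def nmul_single_left)
  then show ?thesis
    by (simp add: strip_pi_def push_sum push_single) (simp add: push_def pm_extend_def)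
qed

text \<open>Only the branch with two leading \<open>\<pi>\<close>'s is not immediate; there \<open>strip_pi\<close> absorbs the
  prepended \<open>\<pi>\<close> of all three terms of the recursion.\<close>
lemma strip_pi_wsh:
  "strip_pi (wsh u v) = strip_pi (wsh u (strip_pi_word v)) + strip_pi (wsh (strip_pi_word u) v)
     - strip_pi (wsh (strip_pi_word u) (strip_pi_word v))"
proof (induction u v rule: wsh.induct)
  case (5 u v)
  have "strip_pi (wsh (Pi # u) (Pi # v))
      = strip_pi (wsh u (Pi # v)) + strip_pi (wsh (Pi # u) v) - strip_pi (wsh u v)"
    by (simp add: strip_pi_add strip_pi_diff strip_pi_prep_Pi)
  then show ?case
    unfolding "5.IH" by (simp add: algebra_simps)
qed simp_all

lemma push_eq_zero_sum_smult:
  assumes "push f q = 0"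
  shows "(\<Sum>v\<in>keys q. smult (c * lookup q v) (G (f v))) = 0"
proof -
  have "coeff_additive (\<lambda>w b. smult (c * b) (G w))"
    by (simp add: coeff_additive_def distrib_left smult_add_left)
  from pm_extend_push[OF this, of f q] show ?thesis
    by (simp add: assms)
qed

lemma strip_pi_shuffle:
  assumes "strip_pi p = 0" "strip_pi q = 0"
  shows "strip_pi (shuffle p q) = 0"
proof -
  have p0: "push strip_pi_word p = 0" and q0: "push strip_pi_word q = 0"
    using assms by (simp_all add: strip_pi_def)
  let ?c = "\<lambda>u v. lookup p u * lookup q v"
  let ?S = "\<lambda>F. \<Sum>u\<in>keys p. \<Sum>v\<in>keys q. smult (?c u v) (strip_pi (F u v))"
  have "strip_pi (shuffle p q) = ?S wsh"
    by (simp add: shuffle_def strip_pi_def push_sum push_smult)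
  also have "\<dots> = ?S (\<lambda>u v. wsh u (strip_pi_word v)) + ?S (\<lambda>u v. wsh (strip_pi_word u) v)
      - ?S (\<lambda>u v. wsh (strip_pi_word u) (strip_pi_word v))"
    by (subst strip_pi_wsh) (simp add: smult_add_right smult_diff_right sum.distrib sum_subtractf)
  also have "?S (\<lambda>u v. wsh u (strip_pi_word v)) = 0"
    by (rule sum.neutral, rule ballI, rule push_eq_zero_sum_smult[OF q0])
  also have "?S (\<lambda>u v. wsh (strip_pi_word u) (strip_pi_word v)) = 0"
    by (rule sum.neutral, rule ballI, rule push_eq_zero_sum_smult[OF q0])
  also have "?S (\<lambda>u v. wsh (strip_pi_word u) v)
      = (\<Sum>v\<in>keys q. \<Sum>u\<in>keys p. smult (lookup q v * lookup p u) (strip_pi (wsh (strip_pi_word u) v)))"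
    by (subst sum.swap) (simp add: mult.commute)
  also have "\<dots> = 0"
    by (rule sum.neutral, rule ballI, rule push_eq_zero_sum_smult[OF p0])
  finally show ?thesis
    by simp
qed

subsection \<open>Words ending in \<open>y\<close>\<close>

definition y_ending :: "word set" where
  "y_ending = {w. w \<noteq> [] \<and> last w = Y}"

lemma Cons_in_y_ending_iff: "a # w \<in> y_ending \<longleftrightarrow> (w = [] \<and> a = Y) \<or> w \<in> y_ending"
  by (auto simp: y_ending_def)

lemma append_in_y_ending: "v \<in> y_ending \<Longrightarrow> u @ v \<in> y_ending"
  by (auto simp: y_ending_def)

lemma keys_prep_y_ending: "keys p \<subseteq> y_ending \<Longrightarrow> keys (prep a p) \<subseteq> y_ending"
  using keys_prep[of a p] by (fastforce simp: Cons_in_y_ending_iff)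

lemma keys_wsh_y_ending:
  "u \<in> insert [] y_ending \<Longrightarrow> v \<in> insert [] y_ending \<Longrightarrow> u @ v \<noteq> []
    \<Longrightarrow> keys (wsh u v) \<subseteq> y_ending"
proof (induction u v rule: wsh.induct)
  case (5 u v)
  then have "u \<in> y_ending" "v \<in> y_ending"
    by (auto simp: Cons_in_y_ending_iff)
  with "5.IH" have "keys (wsh u (Pi # v)) \<subseteq> y_ending" "keys (wsh (Pi # u) v) \<subseteq> y_ending"
      "keys (wsh u v) \<subseteq> y_ending"
    by (auto simp: Cons_in_y_ending_iff y_ending_def)
  then have "keys (prep Pi (wsh u (Pi # v))) \<subseteq> y_ending"
      "keys (prep Pi (wsh (Pi # u) v)) \<subseteq> y_ending" "keys (prep Pi (wsh u v)) \<subseteq> y_ending"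
    by (simp_all add: keys_prep_y_ending)
  then show ?case
    using keys_add[of "prep Pi (wsh u (Pi # v))" "prep Pi (wsh (Pi # u) v)"]
      keys_diff[of "prep Pi (wsh u (Pi # v)) + prep Pi (wsh (Pi # u) v)" "prep Pi (wsh u v)"]
    by (simp only: wsh.simps) blast
qed (auto intro!: keys_prep_y_ending simp: Cons_in_y_ending_iff)

lemma keys_shuffle_y_ending:
  assumes "keys p \<subseteq> y_ending" "keys q \<subseteq> y_ending"
  shows "keys (shuffle p q) \<subseteq> y_ending"
proof -
  have "keys (smult c (wsh u v)) \<subseteq> y_ending" if "u \<in> keys p" "v \<in> keys q" for c u v
    using keys_smult[of c "wsh u v"] keys_wsh_y_ending[of u v] assms that
    by (auto simp: y_ending_def)
  then show ?thesis
    unfolding shuffle_def by (fastforce dest!: subsetD[OF keys_sum])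
qed

lemma keys_nmul_y_ending: "keys q \<subseteq> y_ending \<Longrightarrow> keys (nmul p q) \<subseteq> y_ending"
  using keys_nmul[of p q] append_in_y_ending by blast

lemma keys_nmul_y_ending_left:
  "keys p \<subseteq> y_ending \<Longrightarrow> keys q \<subseteq> insert [] y_ending \<Longrightarrow> keys (nmul p q) \<subseteq> y_ending"
  using keys_nmul[of p q] by (fastforce simp: append_in_y_ending)

lemma keys_z: "keys (z t s) \<subseteq> y_ending"
  unfolding z_def by (intro keys_nmul_y_ending) (simp add: yv_def y_ending_def)

lemma keys_zprod: "keys (zprod ps) \<subseteq> insert [] y_ending"
proof (induction ps)
  case Nil
  then show ?case
    by (simp add: one_def)
next
  case (Cons p ps)
  then show ?case
    using keys_nmul_y_ending_left[OF keys_z Cons.IH] by (cases p) auto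
qed

lemma keys_zprod_Cons: "keys (zprod ((t, s) # ps)) \<subseteq> y_ending"
  using keys_nmul_y_ending_left[OF keys_z keys_zprod] by simp

subsection \<open>\<open>AG0\<close> as a kernel\<close>

definition strip_pi_kernel :: "ncpoly set" where
  "strip_pi_kernel = {p. keys p \<subseteq> y_ending \<and> strip_pi p = 0}"

lemma shuffle_in_strip_pi_kernel:
  "p \<in> strip_pi_kernel \<Longrightarrow> q \<in> strip_pi_kernel \<Longrightarrow> shuffle p q \<in> strip_pi_kernel"
  by (simp add: strip_pi_kernel_def keys_shuffle_y_ending strip_pi_shuffle)

lemma zprod_in_strip_pi_kernel:
  assumes "ps \<noteq> []" "1 \<le> fst (hd ps)" "\<forall>(t, s)\<in>set ps. t \<le> s"
  shows "zprod ps \<in> strip_pi_kernel"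
proof -
  obtain t0 s0 rest where "ps = (t0, s0) # rest" "1 \<le> t0" "t0 \<le> s0"
    using assms by (cases ps) auto
  then obtain t s where ps: "ps = (Suc t, Suc s) # rest"
    by (cases t0; cases s0) auto
  define x where "x = zprod ((t, s) # rest)"
  have "zprod ps = nmul rho x"
    by (simp add: ps x_def z_Suc_Suc nmul_assoc)
  also have "\<dots> = prep Pi x - x"
    by (rule nmul_rho)
  finally have ps_eq: "zprod ps = prep Pi x - x" .
  have "keys x \<subseteq> y_ending"
    unfolding x_def by (rule keys_zprod_Cons)
  then show ?thesis
    using keys_diff[of "prep Pi x" x] keys_prep_y_ending[of x Pi]
    by (auto simp: strip_pi_kernel_def ps_eq strip_pi_diff strip_pi_prep_Pi)
qed

lemma AG0_subset_strip_pi_kernel: "AG0 \<subseteq> strip_pi_kernel"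
proof
  fix p assume "p \<in> AG0"
  then show "p \<in> strip_pi_kernel"
    unfolding AG0_def
  proof (induction rule: qspan.induct)
    case qspan_zero
    then show ?case
      by (simp add: strip_pi_kernel_def strip_pi_def)
  next
    case (qspan_gen p)
    then show ?case
      using zprod_in_strip_pi_kernel by blast
  next
    case (qspan_add p q)
    then show ?case
      using keys_add[of p q] by (auto simp: strip_pi_kernel_def strip_pi_add)
  next
    case (qspan_smult p c)
    then show ?case
      using keys_smult[of c p] by (auto simp: strip_pi_kernel_def strip_pi_def push_smult)
  qed
qed

lemma single_y_ending_eq_zprod:
  assumes "w \<in> y_ending"
  shows "\<exists>s ps. (\<forall>(t, s)\<in>set ps. t \<le> s) \<and> single w 1 = zprod ((0, s) # ps)"
  using assms
proof (induction w)
  case Nil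
  then show ?case
    by (simp add: y_ending_def)
next
  case (Cons a w)
  show ?case
  proof (cases a)
    case Pi
    with Cons obtain s ps where ps: "\<forall>(t, s)\<in>set ps. t \<le> s" "single w 1 = zprod ((0, s) # ps)"
      by (auto simp: Cons_in_y_ending_iff)
    have "single (Pi # w) 1 = prep Pi (single w 1)"
      by (simp add: prep_def nmul_single_single)
    also have "\<dots> = zprod ((0, Suc s) # ps)"
      by (simp add: ps(2) z_0_Suc prep_def nmul_assoc)
    finally show ?thesis
      using Pi ps(1) by blast
  next
    case Y
    obtain ps where ps: "\<forall>(t, s)\<in>set ps. t \<le> s" "single w 1 = zprod ps"
    proof (cases "w = []")
      case True
      then show ?thesis
        using that[of "[]"] by (simp add: one_def)
    next
      case False
      with Cons Y obtain s ps where "\<forall>(t, s)\<in>set ps. t \<le> s" "single w 1 = zprod ((0, s) # ps)"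
        by (auto simp: Cons_in_y_ending_iff)
      then show ?thesis
        using that[of "(0, s) # ps"] by simp
    qed
    have "single (Y # w) 1 = zprod ((0, 0) # ps)"
      by (simp add: ps(2)[symmetric] z_0_0 yv_def nmul_single_single)
    then show ?thesis
      using Y ps(1) by blast
  qed
qed

lemma single_Pi_diff_in_AG0:
  assumes "w \<in> y_ending"
  shows "single (Pi # w) 1 - single w 1 \<in> AG0"
proof -
  obtain s ps where ps: "\<forall>(t, s)\<in>set ps. t \<le> s" "single w 1 = zprod ((0, s) # ps)"
    using single_y_ending_eq_zprod[OF assms] by blast
  have "single (Pi # w) 1 - single w 1 = nmul rho (single w 1)"
    by (simp add: nmul_rho prep_def nmul_single_single)
  also have "\<dots> = zprod ((1, Suc s) # ps)"
    by (simp add: ps(2) z_Suc_Suc nmul_assoc)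
  finally show ?thesis
    unfolding AG0_def using ps(1) by (intro qspan_gen CollectI exI[of _ "(1, Suc s) # ps"]) auto
qed

lemma single_diff_strip_pi_in_AG0:
  "w \<in> y_ending \<Longrightarrow> single w 1 - single (strip_pi_word w) 1 \<in> AG0"
proof (induction w)
  case (Cons a w)
  show ?case
  proof (cases a)
    case Pi
    with Cons.prems have w: "w \<in> y_ending"
      by (simp add: Cons_in_y_ending_iff)
    have "single (Pi # w) 1 - single (strip_pi_word w) 1
        = (single (Pi # w) 1 - single w 1) + (single w 1 - single (strip_pi_word w) 1 :: ncpoly)"
      by simp
    with Pi show ?thesis
      using qspan_add[OF single_Pi_diff_in_AG0[OF w, unfolded AG0_def] Cons.IH[OF w, unfolded AG0_def]]
      by (simp add: AG0_def)
  qed (simp add: AG0_def qspan_zero)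
qed (simp add: AG0_def qspan_zero)

lemma qspan_sum: "(\<And>i. i \<in> I \<Longrightarrow> f i \<in> qspan S) \<Longrightarrow> (\<Sum>i\<in>I. f i) \<in> qspan S"
  by (induction I rule: infinite_finite_induct) (auto intro: qspan.intros)

lemma strip_pi_kernel_subset_AG0: "strip_pi_kernel \<subseteq> AG0"
proof
  fix p assume "p \<in> strip_pi_kernel"
  then have keys: "keys p \<subseteq> y_ending" and strip: "strip_pi p = 0"
    by (simp_all add: strip_pi_kernel_def)
  have "p = pm_extend single p - strip_pi p"
    by (simp add: strip pm_extend_single_id)
  also have "\<dots> = (\<Sum>w\<in>keys p. smult (lookup p w) (single w 1 - single (strip_pi_word w) 1))"
    by (simp add: strip_pi_def push_def pm_extend_def sum_subtractf smult_diff_right smult_single)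
  also have "\<dots> \<in> AG0"
    unfolding AG0_def
    using keys single_diff_strip_pi_in_AG0[unfolded AG0_def]
    by (intro qspan_sum qspan_smult) blast
  finally show "p \<in> AG0" .
qed

lemma AG0_eq_strip_pi_kernel: "AG0 = strip_pi_kernel"
  using AG0_subset_strip_pi_kernel strip_pi_kernel_subset_AG0 by blast

theorem proposition9p1:
  assumes "u \<in> AG0" and "v \<in> AG0"
  shows "shuffle u v \<in> AG0"
  using assms shuffle_in_strip_pi_kernel unfolding AG0_eq_strip_pi_kernel by blast

end
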